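(* Let $S_f=\{f_i\ge 0: i=1,\ldots,m_1\}$ and $S_g=\{g_i\ge0: i=1,\ldots,m_2\}$ be two pure inequality sets in the variables $\mathbf{x}=(x_1,\ldots,x_n)$, and let $S_{f'}$ and $S_{g'}$ be minimal characterization sets of $S_f$ and $S_g$ respectively. If $S_f$ and $S_g$ are equivalent, then $S_{f'}$ and $S_{g'}$ are trivially equivalent.
   Context: An inequality set is a finite set $S=\{f_i\ge 0: i=1,\ldots,m\}$ with each $f_i$ a nonzero homogeneous linear polynomial in $\mathbf{x}$ with real coefficients; its solutions are the points of $\mathbb{R}^n$ satisfying all inequalities; a subset of $S$ is an inequality set whose polynomials form a subset of $\{f_1,\ldots,f_m\}$. The equality $f_k=0$ is an implied equality of $S$ if $f_k(\mathbf{x})=0$ for every solution of $S$; $S$ is pure if it has no implied equalities. Inequalities $f_1\ge0,\ldots,f_k\ge0$ imply $f\ge0$ if every $\mathbf{x}$ satisfying the former satisfies $f(\mathbf{x})\ge0$; an inequality of a set is redundant if implied by the other inequalities of the set. Two inequality sets are equivalent if they have the same solution set. A subset $S'$ of $S$ is a minimal characterization set of $S$ if $S'$ is equivalent to $S$ and contains no redundant inequality. Two inequalities $f\ge0$ and $g\ge 0$ are trivially equivalent if $f=c\,g$ for some real $c>0$. Two inequality sets $S_f, S_g$ are trivially equivalent if they have the same number of inequalities, every inequality of $S_f$ is trivially equivalent to some inequality of $S_g$, and every inequality of $S_g$ is trivially equivalent to some inequality of $S_f$. *)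

theory Defs
  imports "HOL-Analysis.Analysis"
begin

text \<open>A nonzero homogeneous linear polynomial f(x) = a . x on R^n is represented by its
coefficient vector a :: real^'n (a \<noteq> 0). An inequality set is a finite set of such
coefficient vectors, each a standing for the inequality a . x \<ge> 0.\<close>

definition ineq_set :: "(real^'n) set \<Rightarrow> bool" where
  "ineq_set S \<longleftrightarrow> finite S \<and> (\<forall>a\<in>S. a \<noteq> 0)"

definition solutions :: "(real^'n) set \<Rightarrow> (real^'n) set" where
  "solutions S = {x. \<forall>a\<in>S. inner a x \<ge> 0}"

definition implied_equality :: "(real^'n) set \<Rightarrow> real^'n \<Rightarrow> bool" where
  "implied_equality S a \<longleftrightarrow> (\<forall>x\<in>solutions S. inner a x = 0)"

definition pure :: "(real^'n) set \<Rightarrow> bool" where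
  "pure S \<longleftrightarrow> (\<forall>a\<in>S. \<not> implied_equality S a)"

definition ineq_implies :: "(real^'n) set \<Rightarrow> real^'n \<Rightarrow> bool" where
  "ineq_implies T f \<longleftrightarrow> (\<forall>x. (\<forall>b\<in>T. inner b x \<ge> 0) \<longrightarrow> inner f x \<ge> 0)"

definition redundant :: "(real^'n) set \<Rightarrow> real^'n \<Rightarrow> bool" where
  "redundant S a \<longleftrightarrow> a \<in> S \<and> ineq_implies (S - {a}) a"

definition equivalent :: "(real^'n) set \<Rightarrow> (real^'n) set \<Rightarrow> bool" where
  "equivalent S T \<longleftrightarrow> solutions S = solutions T"

definition minimal_characterization :: "(real^'n) set \<Rightarrow> (real^'n) set \<Rightarrow> bool" where
  "minimal_characterization S' S \<longleftrightarrow>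
     S' \<subseteq> S \<and> equivalent S' S \<and> (\<forall>a\<in>S'. \<not> redundant S' a)"

definition triv_equiv_ineq :: "real^'n \<Rightarrow> real^'n \<Rightarrow> bool" where
  "triv_equiv_ineq f g \<longleftrightarrow> (\<exists>c::real. c > 0 \<and> f = c *\<^sub>R g)"

definition triv_equiv_sets :: "(real^'n) set \<Rightarrow> (real^'n) set \<Rightarrow> bool" where
  "triv_equiv_sets Sf Sg \<longleftrightarrow> card Sf = card Sg \<and>
     (\<forall>f\<in>Sf. \<exists>g\<in>Sg. triv_equiv_ineq f g) \<and>
     (\<forall>g\<in>Sg. \<exists>f\<in>Sf. triv_equiv_ineq f g)"

end

(* An irredundant inequality a.x \<ge> 0 of a pure set T defines a facet: moving from a strictly
   feasible point towards a point that violates only a.x \<ge> 0 yields z with a.z = 0 at which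
   every other inequality of T is strict. Near z the solution cone is the halfspace a.x \<ge> 0, so
   an equivalent finite set T' has an inequality a'.x \<ge> 0 tight at z, and a'.x \<ge> 0 then holds
   on that whole halfspace, which forces a' to be a positive multiple of a. Applied in both
   directions this matches the two minimal characterizations; the matching is injective because
   two positive multiples of each other would make one of them redundant. *)
theory Submission
  imports Defs
begin

lemma nonneg_multiple_if_halfspace_subset:
  fixes a a' :: "'a::real_inner"
  assumes "\<And>v. 0 \<le> inner a v \<Longrightarrow> 0 \<le> inner a' v"
  shows "\<exists>c\<ge>0. a' = c *\<^sub>R a"
proof -
  define c where "c = inner a' a / inner a a" \<comment> \<open>for \<open>a = 0\<close> the junk value \<open>c = 0\<close> is the right one\<close>
  define v where "v = a' - c *\<^sub>R a"
  have "inner a v = 0"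
    by (cases "a = 0") (simp_all add: v_def c_def inner_diff_right inner_commute)
  then have "inner a' v = 0"
    using assms[of v] assms[of "- v"] by simp
  with \<open>inner a v = 0\<close> have "inner v v = 0"
    by (simp add: v_def inner_diff_left)
  then have "a' = c *\<^sub>R a"
    by (simp add: v_def)
  moreover have "c \<ge> 0"
    using assms[of a] by (simp add: c_def)
  ultimately show ?thesis
    by blast
qed

lemma small_step_keeps_inner_pos:
  fixes T :: "'a::real_inner set"
  assumes "finite T" and "\<forall>b\<in>T. 0 < inner b z"
  shows "\<exists>s>0. \<forall>b\<in>T. 0 < inner b (z + s *\<^sub>R v)"
proof -
  have "\<forall>\<^sub>F s in at_right 0. 0 < inner b (z + s *\<^sub>R v)" if "b \<in> T" for b
  proof -
    have "((\<lambda>s. inner b (z + s *\<^sub>R v)) \<longlongrightarrow> inner b z) (at_right 0)"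
      by (auto intro!: tendsto_eq_intros)
    then show ?thesis
      using assms(2) that by (auto dest: order_tendstoD(1))
  qed
  then have "\<forall>\<^sub>F s in at_right 0. 0 < s \<and> (\<forall>b\<in>T. 0 < inner b (z + s *\<^sub>R v))"
    using assms(1) by (intro eventually_conj eventually_at_right_less eventually_ball_finite) auto
  then show ?thesis
    using eventually_happens' trivial_limit_at_right_real by blast
qed

lemma pure_imp_strictly_feasible:
  fixes S :: "(real^'n) set"
  assumes "finite S" and "pure S"
  shows "\<exists>x. \<forall>b\<in>S. 0 < inner b x"
proof -
  obtain X where X: "\<And>a. a \<in> S \<Longrightarrow> X a \<in> solutions S \<and> inner a (X a) \<noteq> 0"
    using assms(2) unfolding pure_def implied_equality_def by metis
  have "0 < inner b (\<Sum>a\<in>S. X a)" if "b \<in> S" for b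
  proof -
    have "0 < inner b (X b)"
      using X[OF that] that unfolding solutions_def by force
    also have "\<dots> \<le> (\<Sum>a\<in>S. inner b (X a))"
      using X assms(1) that unfolding solutions_def by (intro member_le_sum) auto
    finally show ?thesis
      by (simp add: inner_sum_right)
  qed
  then show ?thesis
    by blast
qed

lemma irredundant_facet_point:
  fixes T :: "(real^'n) set"
  assumes "\<forall>b\<in>T. 0 < inner b x" and "a \<in> T" and "\<not> ineq_implies (T - {a}) a"
  obtains z where "inner a z = 0" and "\<forall>b\<in>T - {a}. 0 < inner b z"
proof -
  obtain y where y: "\<forall>b\<in>T - {a}. 0 \<le> inner b y" and "inner a y < 0"
    using assms(3) unfolding ineq_implies_def by force
  have "0 < inner a x"
    using assms(1,2) by blast
  define t where "t = inner a x / (inner a x - inner a y)"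
  have "0 < t" "t < 1"
    using \<open>0 < inner a x\<close> \<open>inner a y < 0\<close> by (auto simp: t_def field_simps)
  define z where "z = (1 - t) *\<^sub>R x + t *\<^sub>R y"
  have "inner a z = (1 - t) * inner a x + t * inner a y"
    by (simp add: z_def inner_add_right)
  also have "\<dots> = 0"
    using \<open>0 < inner a x\<close> \<open>inner a y < 0\<close> by (simp add: t_def field_simps)
  finally have "inner a z = 0" .
  moreover have "0 < inner b z" if "b \<in> T - {a}" for b
    using assms(1) y that \<open>0 < t\<close> \<open>t < 1\<close>
    by (simp add: z_def inner_add_right add_pos_nonneg)
  ultimately show ?thesis
    using that by blast
qed

lemma exists_tight_constraint:
  fixes T T' :: "(real^'n) set"
  assumes "finite T'" and "solutions T' = solutions T"
    and "a \<in> T" and "a \<noteq> 0" and "z \<in> solutions T" and "inner a z = 0"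
  shows "\<exists>a'\<in>T'. inner a' z = 0"
proof (rule ccontr)
  assume "\<not> ?thesis"
  moreover have "\<forall>a'\<in>T'. 0 \<le> inner a' z"
    using assms(2,5) unfolding solutions_def by blast
  ultimately have "\<forall>a'\<in>T'. 0 < inner a' z"
    by (auto simp: less_le)
  then obtain s where "0 < s" and "\<forall>a'\<in>T'. 0 < inner a' (z + s *\<^sub>R - a)"
    using small_step_keeps_inner_pos[OF assms(1)] by blast
  then have "z + s *\<^sub>R - a \<in> solutions T"
    using assms(2) unfolding solutions_def by (auto intro: less_imp_le)
  then have "0 \<le> inner a (z + s *\<^sub>R - a)"
    using assms(3) unfolding solutions_def by blast
  moreover have "inner a (z + s *\<^sub>R - a) < 0"
    using assms(4,6) \<open>0 < s\<close> by (simp add: inner_diff_right)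
  ultimately show False
    by linarith
qed

lemma facet_point_step_in_halfspace:
  fixes T :: "(real^'n) set"
  assumes "finite T" and "inner a z = 0" and "\<forall>b\<in>T - {a}. 0 < inner b z"
    and "0 \<le> inner a v"
  obtains s where "0 < s" and "z + s *\<^sub>R v \<in> solutions T"
proof -
  obtain s where "0 < s" and s: "\<forall>b\<in>T - {a}. 0 < inner b (z + s *\<^sub>R v)"
    using small_step_keeps_inner_pos[of "T - {a}"] assms(1,3) by blast
  have "0 \<le> inner a (z + s *\<^sub>R v)"
    using assms(2,4) \<open>0 < s\<close> by (simp add: inner_add_right)
  with s have "z + s *\<^sub>R v \<in> solutions T"
    unfolding solutions_def by (auto intro: less_imp_le)
  with \<open>0 < s\<close> show ?thesis
    using that by blast
qed

lemma irredundant_has_positive_multiple: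
  fixes T T' :: "(real^'n) set"
  assumes "finite T" and "\<forall>b\<in>T. 0 < inner b x" and "a \<in> T"
    and "\<not> ineq_implies (T - {a}) a"
    and "ineq_set T'" and "solutions T' = solutions T"
  shows "\<exists>a'\<in>T'. triv_equiv_ineq a' a"
proof -
  have "a \<noteq> 0"
    using assms(2,3) by fastforce
  obtain z where az: "inner a z = 0" and bz: "\<forall>b\<in>T - {a}. 0 < inner b z"
    using irredundant_facet_point assms(2-4) by blast
  then have "z \<in> solutions T"
    unfolding solutions_def by (force intro: less_imp_le)
  then obtain a' where "a' \<in> T'" and a'z: "inner a' z = 0"
    using exists_tight_constraint[OF _ assms(6,3) \<open>a \<noteq> 0\<close> _ az] assms(5)
    unfolding ineq_set_def by blast
  have "0 \<le> inner a' v" if av: "0 \<le> inner a v" for v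
  proof -
    obtain s where "0 < s" and "z + s *\<^sub>R v \<in> solutions T'"
      using facet_point_step_in_halfspace[OF assms(1) az bz av] assms(6) by metis
    then have "0 \<le> inner a' (z + s *\<^sub>R v)"
      using \<open>a' \<in> T'\<close> unfolding solutions_def by blast
    with a'z \<open>0 < s\<close> show ?thesis
      by (simp add: inner_add_right zero_le_mult_iff)
  qed
  then have "\<exists>c\<ge>0. a' = c *\<^sub>R a"
    by (rule nonneg_multiple_if_halfspace_subset)
  then obtain c where "c \<ge> 0" and a'_eq: "a' = c *\<^sub>R a"
    by blast
  moreover have "a' \<noteq> 0"
    using assms(5) \<open>a' \<in> T'\<close> unfolding ineq_set_def by blast
  ultimately have "c > 0"
    by auto
  with a'_eq \<open>a' \<in> T'\<close> show ?thesis
    unfolding triv_equiv_ineq_def by blast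
qed

lemma redundant_if_positive_multiple:
  fixes S :: "(real^'n) set"
  assumes "f \<in> S" and "g \<in> S" and "f \<noteq> g" and "triv_equiv_ineq f g"
  shows "redundant S f"
  using assms unfolding redundant_def ineq_implies_def triv_equiv_ineq_def
  by auto

lemma triv_equiv_ineq_sym:
  fixes f g :: "real^'n"
  assumes "triv_equiv_ineq f g"
  shows "triv_equiv_ineq g f"
proof -
  obtain c where "c > 0" and "f = c *\<^sub>R g"
    using assms unfolding triv_equiv_ineq_def by blast
  then have "1 / c > 0" and "g = (1 / c) *\<^sub>R f"
    by auto
  then show ?thesis
    unfolding triv_equiv_ineq_def by blast
qed

lemma triv_equiv_ineq_trans:
  fixes f g h :: "real^'n"
  assumes "triv_equiv_ineq f g" and "triv_equiv_ineq g h"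
  shows "triv_equiv_ineq f h"
  using assms unfolding triv_equiv_ineq_def by (metis mult_pos_pos scaleR_scaleR)

lemma card_le_if_irredundant_multiples:
  fixes A B :: "(real^'n) set"
  assumes "finite B" and "\<forall>f\<in>A. \<exists>g\<in>B. triv_equiv_ineq f g"
    and "\<forall>f\<in>A. \<not> redundant A f"
  shows "card A \<le> card B"
proof -
  obtain h where h: "\<And>f. f \<in> A \<Longrightarrow> h f \<in> B \<and> triv_equiv_ineq f (h f)"
    using assms(2) by metis
  have "inj_on h A"
  proof (rule inj_onI)
    fix f1 f2
    assume "f1 \<in> A" "f2 \<in> A" "h f1 = h f2"
    then have "triv_equiv_ineq f1 f2"
      using h triv_equiv_ineq_sym triv_equiv_ineq_trans by metis
    then show "f1 = f2"
      using redundant_if_positive_multiple assms(3) \<open>f1 \<in> A\<close> \<open>f2 \<in> A\<close> by blast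
  qed
  moreover have "h ` A \<subseteq> B"
    using h by blast
  ultimately show ?thesis
    using card_inj_on_le assms(1) by blast
qed

lemma minimal_characterizations_positive_multiples:
  fixes Sf Sg Sf' Sg' :: "(real^'n) set"
  assumes "ineq_set Sf" and "ineq_set Sg" and "pure Sf"
    and "minimal_characterization Sf' Sf" and "minimal_characterization Sg' Sg"
    and "equivalent Sf Sg"
  shows "\<forall>f\<in>Sf'. \<exists>g\<in>Sg'. triv_equiv_ineq g f"
proof
  fix f
  assume "f \<in> Sf'"
  have "finite Sf" and "Sf' \<subseteq> Sf" and "Sg' \<subseteq> Sg"
    using assms(1,4,5) unfolding ineq_set_def minimal_characterization_def by auto
  then have "finite Sf'" and "ineq_set Sg'"
    using assms(2) finite_subset unfolding ineq_set_def by blast+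
  obtain x where "\<forall>b\<in>Sf. 0 < inner b x"
    using pure_imp_strictly_feasible \<open>finite Sf\<close> assms(3) by blast
  moreover have "solutions Sg' = solutions Sf'"
    using assms(4-6) unfolding minimal_characterization_def equivalent_def by simp
  moreover have "\<not> ineq_implies (Sf' - {f}) f"
    using assms(4) \<open>f \<in> Sf'\<close> unfolding minimal_characterization_def redundant_def by blast
  ultimately show "\<exists>g\<in>Sg'. triv_equiv_ineq g f"
    using irredundant_has_positive_multiple \<open>finite Sf'\<close> \<open>Sf' \<subseteq> Sf\<close> \<open>f \<in> Sf'\<close>
      \<open>ineq_set Sg'\<close>
    by (metis subsetD)
qed

theorem theorem4:
  fixes Sf Sg Sf' Sg' :: "(real^'n) set"
  assumes "ineq_set Sf" and "ineq_set Sg"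
    and "pure Sf" and "pure Sg"
    and "minimal_characterization Sf' Sf"
    and "minimal_characterization Sg' Sg"
    and "equivalent Sf Sg"
  shows "triv_equiv_sets Sf' Sg'"
proof -
  have "equivalent Sg Sf"
    using assms(7) unfolding equivalent_def by simp
  then have fg: "\<forall>f\<in>Sf'. \<exists>g\<in>Sg'. triv_equiv_ineq f g"
    and gf: "\<forall>g\<in>Sg'. \<exists>f\<in>Sf'. triv_equiv_ineq g f"
    using minimal_characterizations_positive_multiples[OF assms(1,2,3,5,6,7)]
      minimal_characterizations_positive_multiples[OF assms(2,1,4,6,5)]
      triv_equiv_ineq_sym by blast+
  have "finite Sf'" and "finite Sg'"
    using assms(1,2,5,6) finite_subset
    unfolding ineq_set_def minimal_characterization_def by blast+
  moreover have "\<forall>f\<in>Sf'. \<not> redundant Sf' f" and "\<forall>g\<in>Sg'. \<not> redundant Sg' g"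
    using assms(5,6) unfolding minimal_characterization_def by blast+
  ultimately have "card Sf' = card Sg'"
    using card_le_if_irredundant_multiples fg gf by (metis le_antisym)
  then show ?thesis
    unfolding triv_equiv_sets_def using fg gf triv_equiv_ineq_sym by blast
qed

end
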